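(* Let $B$ be a bisimplicial groupoid and $f$ a perfect abacus map for $B$, and let $\tilde B$ be the bisimplicial groupoid obtained from $B$ by replacing each top vertical face map $e_{i+1}:B_{i+1,j}\to B_{i,j}$ by $\tilde e_{i+1}:=d_0\circ f_{i,j}$ (keeping all other structure maps). Then for each $j$ the map $f_{\bullet,j}:\mathrm{Dec}_\top(\tilde B_{\bullet,j})\to\tilde B_{\bullet,j+1}$ is simplicial, and this construction is idempotent: applying it to $\tilde B$ with the abacus map $f$ returns $\tilde B$.
   Context: A bisimplicial groupoid $B:\Delta^{\mathrm{op}}\times\Delta^{\mathrm{op}}\to\mathbf{Grpd}$ has horizontal maps $d_k:B_{i,j}\to B_{i,j-1}$, $s_k:B_{i,j}\to B_{i,j+1}$ and vertical maps $e_k:B_{i,j}\to B_{i-1,j}$, $t_k:B_{i,j}\to B_{i+1,j}$; on $B_{i,j}$, $d_\bot=d_0$, $e_\top=e_i$, $e_{\top-1}=e_{i-1}$, $t_\top=t_i$. For a simplicial groupoid $Z$, $\mathrm{Dec}_\bot Z$ is $Z$ shifted down by one with the $d_0,s_0$ maps deleted, and $\mathrm{Dec}_\top Z$ is $Z$ shifted down by one with the last face and degeneracy maps deleted. An abacus map is a family $f_{i,j}:B_{i+1,j}\to B_{i,j+1}$ ($i,j\ge0$) such that each $f_{i,\bullet}:B_{i+1,\bullet}\to\mathrm{Dec}_\bot(B_{i,\bullet})$ is simplicial, each $f_{\bullet,j}:\mathrm{Dec}_\top(B_{\bullet,j})\to B_{\bullet,j+1}$ commutes with all structure maps except top face maps,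 and $d_\bot f_{i,j}t_\top=\mathrm{id}$. It is perfect if moreover $f_{i,j}\circ e_{\top-1}=d_\bot\circ f_{i,j+1}\circ f_{i+1,j}$ (as maps $B_{i+2,j}\to B_{i,j+1}$) and $e_\top=d_\bot\circ f_{i,j}$ (as maps $B_{i+1,j}\to B_{i,j}$) for all $i,j$. *)

theory Defs
  imports Main
begin

record ('o, 'm) grpd =
  gobj :: "'o set"
  garr :: "'m set"
  gdom :: "'m \<Rightarrow> 'o"
  gcod :: "'m \<Rightarrow> 'o"
  gcmp :: "'m \<Rightarrow> 'm \<Rightarrow> 'm"   (* gcmp G g f = g after f, needs gcod f = gdom g *)
  gid  :: "'o \<Rightarrow> 'm"
  ginv :: "'m \<Rightarrow> 'm"

definition groupoid :: "('o, 'm) grpd \<Rightarrow> bool" where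
  "groupoid G \<longleftrightarrow>
     (\<forall>a\<in>garr G. gdom G a \<in> gobj G \<and> gcod G a \<in> gobj G) \<and>
     (\<forall>x\<in>gobj G. gid G x \<in> garr G \<and> gdom G (gid G x) = x \<and> gcod G (gid G x) = x) \<and>
     (\<forall>f\<in>garr G. \<forall>g\<in>garr G. gcod G f = gdom G g \<longrightarrow>
         gcmp G g f \<in> garr G \<and> gdom G (gcmp G g f) = gdom G f \<and> gcod G (gcmp G g f) = gcod G g) \<and>
     (\<forall>f\<in>garr G. \<forall>g\<in>garr G. \<forall>h\<in>garr G. gcod G f = gdom G g \<and> gcod G g = gdom G h \<longrightarrow>
         gcmp G h (gcmp G g f) = gcmp G (gcmp G h g) f) \<and>
     (\<forall>f\<in>garr G. gcmp G f (gid G (gdom G f)) = f \<and> gcmp G (gid G (gcod G f)) f = f) \<and>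
     (\<forall>f\<in>garr G. ginv G f \<in> garr G \<and> gdom G (ginv G f) = gcod G f \<and> gcod G (ginv G f) = gdom G f \<and>
         gcmp G (ginv G f) f = gid G (gdom G f) \<and> gcmp G f (ginv G f) = gid G (gcod G f))"

type_synonym ('o, 'm) gfun = "('o \<Rightarrow> 'o) \<times> ('m \<Rightarrow> 'm)"

definition is_functor :: "('o, 'm) grpd \<Rightarrow> ('o, 'm) grpd \<Rightarrow> ('o, 'm) gfun \<Rightarrow> bool" where
  "is_functor G H F \<longleftrightarrow>
     (\<forall>x\<in>gobj G. fst F x \<in> gobj H) \<and>
     (\<forall>a\<in>garr G. snd F a \<in> garr H \<and> gdom H (snd F a) = fst F (gdom G a)
                  \<and> gcod H (snd F a) = fst F (gcod G a)) \<and>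
     (\<forall>f\<in>garr G. \<forall>g\<in>garr G. gcod G f = gdom G g \<longrightarrow>
         snd F (gcmp G g f) = gcmp H (snd F g) (snd F f)) \<and>
     (\<forall>x\<in>gobj G. snd F (gid G x) = gid H (fst F x))"

definition fcomp :: "('o, 'm) gfun \<Rightarrow> ('o, 'm) gfun \<Rightarrow> ('o, 'm) gfun" where
  "fcomp F G = (fst F \<circ> fst G, snd F \<circ> snd G)"

definition fid :: "('o, 'm) gfun" where
  "fid = (id, id)"

definition feq :: "('o, 'm) grpd \<Rightarrow> ('o, 'm) gfun \<Rightarrow> ('o, 'm) gfun \<Rightarrow> bool" where
  "feq G F F' \<longleftrightarrow> (\<forall>x\<in>gobj G. fst F x = fst F' x) \<and> (\<forall>a\<in>garr G. snd F a = snd F' a)"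

text \<open>X n is the groupoid of n-simplices; d n k : X n \<rightarrow> X (n-1) for n \<ge> 1, k \<le> n;
  s n k : X n \<rightarrow> X (n+1) for k \<le> n.\<close>

definition simplicial ::
  "(nat \<Rightarrow> ('o, 'm) grpd) \<Rightarrow> (nat \<Rightarrow> nat \<Rightarrow> ('o, 'm) gfun) \<Rightarrow> (nat \<Rightarrow> nat \<Rightarrow> ('o, 'm) gfun) \<Rightarrow> bool" where
  "simplicial X d s \<longleftrightarrow>
     (\<forall>n. groupoid (X n)) \<and>
     (\<forall>n k. k \<le> Suc n \<longrightarrow> is_functor (X (Suc n)) (X n) (d (Suc n) k)) \<and>
     (\<forall>n k. k \<le> n \<longrightarrow> is_functor (X n) (X (Suc n)) (s n k)) \<and>
     (\<forall>n i j. i < j \<and> j \<le> n + 2 \<longrightarrow>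
        feq (X (n + 2)) (fcomp (d (n + 1) i) (d (n + 2) j)) (fcomp (d (n + 1) (j - 1)) (d (n + 2) i))) \<and>
     (\<forall>n i j. i \<le> j \<and> j \<le> n \<longrightarrow>
        feq (X n) (fcomp (s (n + 1) i) (s n j)) (fcomp (s (n + 1) (j + 1)) (s n i))) \<and>
     (\<forall>n i j. i < j \<and> j \<le> n \<longrightarrow>
        feq (X n) (fcomp (d (n + 1) i) (s n j)) (fcomp (s (n - 1) (j - 1)) (d n i))) \<and>
     (\<forall>n j. j \<le> n \<longrightarrow>
        feq (X n) (fcomp (d (n + 1) j) (s n j)) fid \<and> feq (X n) (fcomp (d (n + 1) (j + 1)) (s n j)) fid) \<and>
     (\<forall>n i j. j + 1 < i \<and> i \<le> n + 1 \<longrightarrow>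
        feq (X n) (fcomp (d (n + 1) i) (s n j)) (fcomp (s (n - 1) j) (d n (i - 1))))"

definition simplicial_map ::
  "(nat \<Rightarrow> ('o, 'm) grpd) \<Rightarrow> (nat \<Rightarrow> nat \<Rightarrow> ('o, 'm) gfun) \<Rightarrow> (nat \<Rightarrow> nat \<Rightarrow> ('o, 'm) gfun) \<Rightarrow>
   (nat \<Rightarrow> ('o, 'm) grpd) \<Rightarrow> (nat \<Rightarrow> nat \<Rightarrow> ('o, 'm) gfun) \<Rightarrow> (nat \<Rightarrow> nat \<Rightarrow> ('o, 'm) gfun) \<Rightarrow>
   (nat \<Rightarrow> ('o, 'm) gfun) \<Rightarrow> bool" where
  "simplicial_map X dX sX Y dY sY g \<longleftrightarrow>
     (\<forall>n. is_functor (X n) (Y n) (g n)) \<and>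
     (\<forall>n k. k \<le> Suc n \<longrightarrow> feq (X (Suc n)) (fcomp (dY (Suc n) k) (g (Suc n))) (fcomp (g n) (dX (Suc n) k))) \<and>
     (\<forall>n k. k \<le> n \<longrightarrow> feq (X n) (fcomp (sY n k) (g n)) (fcomp (g (Suc n)) (sX n k)))"

text \<open>Same, but not required to commute with the top face maps d (n+1) (n+1).\<close>
definition simplicial_map_but_top ::
  "(nat \<Rightarrow> ('o, 'm) grpd) \<Rightarrow> (nat \<Rightarrow> nat \<Rightarrow> ('o, 'm) gfun) \<Rightarrow> (nat \<Rightarrow> nat \<Rightarrow> ('o, 'm) gfun) \<Rightarrow>
   (nat \<Rightarrow> ('o, 'm) grpd) \<Rightarrow> (nat \<Rightarrow> nat \<Rightarrow> ('o, 'm) gfun) \<Rightarrow> (nat \<Rightarrow> nat \<Rightarrow> ('o, 'm) gfun) \<Rightarrow>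
   (nat \<Rightarrow> ('o, 'm) gfun) \<Rightarrow> bool" where
  "simplicial_map_but_top X dX sX Y dY sY g \<longleftrightarrow>
     (\<forall>n. is_functor (X n) (Y n) (g n)) \<and>
     (\<forall>n k. k \<le> n \<longrightarrow> feq (X (Suc n)) (fcomp (dY (Suc n) k) (g (Suc n))) (fcomp (g n) (dX (Suc n) k))) \<and>
     (\<forall>n k. k \<le> n \<longrightarrow> feq (X n) (fcomp (sY n k) (g n)) (fcomp (g (Suc n)) (sX n k)))"

text \<open>Decalage: shift down by one; Dec_bot deletes d_0, s_0; Dec_top deletes the last ones.\<close>
definition dec_obj :: "(nat \<Rightarrow> 'a) \<Rightarrow> nat \<Rightarrow> 'a" where
  "dec_obj X = (\<lambda>n. X (Suc n))"

definition dec_bot_maps :: "(nat \<Rightarrow> nat \<Rightarrow> 'f) \<Rightarrow> nat \<Rightarrow> nat \<Rightarrow> 'f" where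
  "dec_bot_maps d = (\<lambda>n k. d (Suc n) (Suc k))"

definition dec_top_maps :: "(nat \<Rightarrow> nat \<Rightarrow> 'f) \<Rightarrow> nat \<Rightarrow> nat \<Rightarrow> 'f" where
  "dec_top_maps d = (\<lambda>n k. d (Suc n) k)"

text \<open>B i j; horizontal dh i j k : B i j \<rightarrow> B i (j-1), sh i j k : B i j \<rightarrow> B i (j+1);
  vertical ve i j k : B i j \<rightarrow> B (i-1) j, vt i j k : B i j \<rightarrow> B (i+1) j.\<close>

definition column :: "(nat \<Rightarrow> nat \<Rightarrow> 'a) \<Rightarrow> nat \<Rightarrow> nat \<Rightarrow> 'a" where
  "column B j = (\<lambda>i. B i j)"

definition column_maps :: "(nat \<Rightarrow> nat \<Rightarrow> nat \<Rightarrow> 'f) \<Rightarrow> nat \<Rightarrow> nat \<Rightarrow> nat \<Rightarrow> 'f" where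
  "column_maps e j = (\<lambda>i k. e i j k)"

definition bisimplicial ::
  "(nat \<Rightarrow> nat \<Rightarrow> ('o, 'm) grpd) \<Rightarrow>
   (nat \<Rightarrow> nat \<Rightarrow> nat \<Rightarrow> ('o, 'm) gfun) \<Rightarrow> (nat \<Rightarrow> nat \<Rightarrow> nat \<Rightarrow> ('o, 'm) gfun) \<Rightarrow>
   (nat \<Rightarrow> nat \<Rightarrow> nat \<Rightarrow> ('o, 'm) gfun) \<Rightarrow> (nat \<Rightarrow> nat \<Rightarrow> nat \<Rightarrow> ('o, 'm) gfun) \<Rightarrow> bool" where
  "bisimplicial B dh sh ve vt \<longleftrightarrow>
     (\<forall>i. simplicial (B i) (dh i) (sh i)) \<and>
     (\<forall>j. simplicial (column B j) (column_maps ve j) (column_maps vt j)) \<and>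
     (\<forall>i j k l. k \<le> Suc i \<and> l \<le> Suc j \<longrightarrow>
        feq (B (Suc i) (Suc j)) (fcomp (ve (Suc i) j k) (dh (Suc i) (Suc j) l))
                                (fcomp (dh i (Suc j) l) (ve (Suc i) (Suc j) k))) \<and>
     (\<forall>i j k l. k \<le> Suc i \<and> l \<le> j \<longrightarrow>
        feq (B (Suc i) j) (fcomp (ve (Suc i) (Suc j) k) (sh (Suc i) j l))
                          (fcomp (sh i j l) (ve (Suc i) j k))) \<and>
     (\<forall>i j k l. k \<le> i \<and> l \<le> Suc j \<longrightarrow>
        feq (B i (Suc j)) (fcomp (vt i j k) (dh i (Suc j) l))
                          (fcomp (dh (Suc i) (Suc j) l) (vt i (Suc j) k))) \<and>
     (\<forall>i j k l. k \<le> i \<and> l \<le> j \<longrightarrow>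
        feq (B i j) (fcomp (vt i (Suc j) k) (sh i j l))
                    (fcomp (sh (Suc i) j l) (vt i j k)))"

text \<open>f i j : B (i+1) j \<rightarrow> B i (j+1).\<close>

definition abacus_map ::
  "(nat \<Rightarrow> nat \<Rightarrow> ('o, 'm) grpd) \<Rightarrow>
   (nat \<Rightarrow> nat \<Rightarrow> nat \<Rightarrow> ('o, 'm) gfun) \<Rightarrow> (nat \<Rightarrow> nat \<Rightarrow> nat \<Rightarrow> ('o, 'm) gfun) \<Rightarrow>
   (nat \<Rightarrow> nat \<Rightarrow> nat \<Rightarrow> ('o, 'm) gfun) \<Rightarrow> (nat \<Rightarrow> nat \<Rightarrow> nat \<Rightarrow> ('o, 'm) gfun) \<Rightarrow>
   (nat \<Rightarrow> nat \<Rightarrow> ('o, 'm) gfun) \<Rightarrow> bool" where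
  "abacus_map B dh sh ve vt f \<longleftrightarrow>
     (\<forall>i. simplicial_map (B (Suc i)) (dh (Suc i)) (sh (Suc i))
            (dec_obj (B i)) (dec_bot_maps (dh i)) (dec_bot_maps (sh i)) (f i)) \<and>
     (\<forall>j. simplicial_map_but_top
            (dec_obj (column B j)) (dec_top_maps (column_maps ve j)) (dec_top_maps (column_maps vt j))
            (column B (Suc j)) (column_maps ve (Suc j)) (column_maps vt (Suc j)) (\<lambda>i. f i j)) \<and>
     (\<forall>i j. feq (B i j) (fcomp (dh i (Suc j) 0) (fcomp (f i j) (vt i j i))) fid)"

definition perfect_abacus_map ::
  "(nat \<Rightarrow> nat \<Rightarrow> ('o, 'm) grpd) \<Rightarrow>
   (nat \<Rightarrow> nat \<Rightarrow> nat \<Rightarrow> ('o, 'm) gfun) \<Rightarrow> (nat \<Rightarrow> nat \<Rightarrow> nat \<Rightarrow> ('o, 'm) gfun) \<Rightarrow>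
   (nat \<Rightarrow> nat \<Rightarrow> nat \<Rightarrow> ('o, 'm) gfun) \<Rightarrow> (nat \<Rightarrow> nat \<Rightarrow> nat \<Rightarrow> ('o, 'm) gfun) \<Rightarrow>
   (nat \<Rightarrow> nat \<Rightarrow> ('o, 'm) gfun) \<Rightarrow> bool" where
  "perfect_abacus_map B dh sh ve vt f \<longleftrightarrow>
     abacus_map B dh sh ve vt f \<and>
     (\<forall>i j. feq (B (Suc (Suc i)) j) (fcomp (f i j) (ve (Suc (Suc i)) j (Suc i)))
                (fcomp (dh i (Suc (Suc j)) 0) (fcomp (f i (Suc j)) (f (Suc i) j)))) \<and>
     (\<forall>i j. feq (B (Suc i) j) (ve (Suc i) j (Suc i)) (fcomp (dh i (Suc j) 0) (f i j)))"

definition tilde_ve ::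
  "(nat \<Rightarrow> nat \<Rightarrow> nat \<Rightarrow> ('o, 'm) gfun) \<Rightarrow> (nat \<Rightarrow> nat \<Rightarrow> ('o, 'm) gfun) \<Rightarrow>
   (nat \<Rightarrow> nat \<Rightarrow> nat \<Rightarrow> ('o, 'm) gfun) \<Rightarrow> nat \<Rightarrow> nat \<Rightarrow> nat \<Rightarrow> ('o, 'm) gfun" where
  "tilde_ve dh f ve = (\<lambda>i j k. if 0 < i \<and> k = i then fcomp (dh (i - 1) (Suc j) 0) (f (i - 1) j) else ve i j k)"

end

theory Submission
  imports Defs
begin

text \<open>The second perfectness equation \<open>e\<^sub>\<top> = d\<^sub>0 \<circ> f\<close> says that the new top face agrees
  with the old one on all objects and arrows, so every simplicial and bisimplicial identity
  of \<open>B\<close> transfers to \<open>B\<^sup>~\<close>. For \<open>f\<^sub>\<bullet>\<^sub>,\<^sub>j\<close> the abacus axioms already give every identity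
  except commutation with the top faces; the top face of \<open>Dec\<^sub>\<top>(B\<^sup>~\<^sub>\<bullet>\<^sub>,\<^sub>j)\<close> is an
  unmodified \<open>e\<^sub>\<top>\<^sub>-\<^sub>1\<close>, while that of \<open>B\<^sup>~\<^sub>\<bullet>\<^sub>,\<^sub>j\<^sub>+\<^sub>1\<close> is \<open>d\<^sub>0 \<circ> f\<close>, so this identity is exactly the
  first perfectness equation \<open>f \<circ> e\<^sub>\<top>\<^sub>-\<^sub>1 = d\<^sub>0 \<circ> f \<circ> f\<close>. Idempotence holds because the new
  top face is built from \<open>d\<close> and \<open>f\<close> alone.\<close>

lemma feq_refl [simp]: "feq G F F"
  by (simp add: feq_def)

lemma feq_sym: "feq G F F' \<Longrightarrow> feq G F' F"
  by (simp add: feq_def)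

lemma feq_trans [trans]: "feq G F F' \<Longrightarrow> feq G F' F'' \<Longrightarrow> feq G F F''"
  by (simp add: feq_def)

lemma is_functor_feq:
  assumes "groupoid G" "is_functor G H F" "feq G F F'"
  shows "is_functor G H F'"
  using assms unfolding groupoid_def is_functor_def feq_def by auto

lemma feq_fcomp_cong:
  assumes "is_functor G H F" "feq G F F'" "feq H K K'"
  shows "feq G (fcomp K F) (fcomp K' F')"
  using assms unfolding is_functor_def feq_def fcomp_def by auto

lemma feq_fcomp_transfer:
  assumes "feq G (fcomp K F) (fcomp L M)"
    and "is_functor G H F" "feq G F F'" "feq H K K'"
    and "is_functor G H' M" "feq G M M'" "feq H' L L'"
  shows "feq G (fcomp K' F') (fcomp L' M')"
proof -
  have "feq G (fcomp K' F') (fcomp K F)"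
    using feq_fcomp_cong[OF assms(2-4)] by (rule feq_sym)
  also note assms(1)
  also have "feq G (fcomp L M) (fcomp L' M')"
    using feq_fcomp_cong[OF assms(5-7)] .
  finally show ?thesis .
qed

lemma fcomp_assoc: "fcomp (fcomp K L) M = fcomp K (fcomp L M)"
  by (simp add: fcomp_def comp_assoc)

lemma simplicial_feq_faces:
  assumes S: "simplicial X d s"
    and faces: "\<And>n k. k \<le> Suc n \<Longrightarrow> feq (X (Suc n)) (d' (Suc n) k) (d (Suc n) k)"
  shows "simplicial X d' s"
proof -
  have G: "\<And>n. groupoid (X n)"
    and Fd: "\<And>n k. k \<le> Suc n \<Longrightarrow> is_functor (X (Suc n)) (X n) (d (Suc n) k)"
    and Fs: "\<And>n k. k \<le> n \<Longrightarrow> is_functor (X n) (X (Suc n)) (s n k)"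
    and dd: "\<And>n i j. i < j \<and> j \<le> n + 2 \<Longrightarrow>
        feq (X (n + 2)) (fcomp (d (n + 1) i) (d (n + 2) j)) (fcomp (d (n + 1) (j - 1)) (d (n + 2) i))"
    and ss: "\<And>n i j. i \<le> j \<and> j \<le> n \<Longrightarrow>
        feq (X n) (fcomp (s (n + 1) i) (s n j)) (fcomp (s (n + 1) (j + 1)) (s n i))"
    and ds_lt: "\<And>n i j. i < j \<and> j \<le> n \<Longrightarrow>
        feq (X n) (fcomp (d (n + 1) i) (s n j)) (fcomp (s (n - 1) (j - 1)) (d n i))"
    and ds_eq: "\<And>n j. j \<le> n \<Longrightarrow>
        feq (X n) (fcomp (d (n + 1) j) (s n j)) fid \<and> feq (X n) (fcomp (d (n + 1) (j + 1)) (s n j)) fid"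
    and ds_gt: "\<And>n i j. j + 1 < i \<and> i \<le> n + 1 \<Longrightarrow>
        feq (X n) (fcomp (d (n + 1) i) (s n j)) (fcomp (s (n - 1) j) (d n (i - 1)))"
    using S unfolding simplicial_def by simp_all
  have faces': "k \<le> Suc n \<Longrightarrow> feq (X (Suc n)) (d (Suc n) k) (d' (Suc n) k)" for n k
    using faces by (rule feq_sym)
  show ?thesis
    unfolding simplicial_def
  proof (intro conjI allI impI)
    show "groupoid (X n)" for n
      by (rule G)
    show "is_functor (X (Suc n)) (X n) (d' (Suc n) k)" if "k \<le> Suc n" for n k
      using G Fd[OF that] faces'[OF that] by (rule is_functor_feq)
    show "is_functor (X n) (X (Suc n)) (s n k)" if "k \<le> n" for n k
      using that by (rule Fs)
  next
    fix n i j :: nat assume a: "i < j \<and> j \<le> n + 2"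
    show "feq (X (n + 2)) (fcomp (d' (n + 1) i) (d' (n + 2) j)) (fcomp (d' (n + 1) (j - 1)) (d' (n + 2) i))"
      by (rule feq_fcomp_transfer[OF dd[OF a], where H="X (n + 1)" and H'="X (n + 1)"])
        (use a in \<open>auto simp: Fd faces'\<close>)
  next
    fix n i j :: nat assume "i \<le> j \<and> j \<le> n"
    then show "feq (X n) (fcomp (s (n + 1) i) (s n j)) (fcomp (s (n + 1) (j + 1)) (s n i))"
      by (rule ss)
  next
    fix n i j :: nat assume a: "i < j \<and> j \<le> n"
    then obtain m where n: "n = Suc m" by (cases n) auto
    show "feq (X n) (fcomp (d' (n + 1) i) (s n j)) (fcomp (s (n - 1) (j - 1)) (d' n i))"
      by (rule feq_fcomp_transfer[OF ds_lt[OF a], where H="X (n + 1)" and H'="X m"])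
        (use a in \<open>auto simp: n Fs Fd faces'\<close>)
  next
    fix n j :: nat assume a: "j \<le> n"
    have cong: "feq (X n) (fcomp (d' (Suc n) l) (s n j)) (fcomp (d (Suc n) l) (s n j))"
      if "l \<le> Suc n" for l
      using Fs[OF a] feq_refl faces[OF that] by (rule feq_fcomp_cong)
    show "feq (X n) (fcomp (d' (n + 1) j) (s n j)) fid"
      using feq_trans[OF cong ds_eq[OF a, simplified, THEN conjunct1]] a by simp
    show "feq (X n) (fcomp (d' (n + 1) (j + 1)) (s n j)) fid"
      using feq_trans[OF cong ds_eq[OF a, simplified, THEN conjunct2]] a by simp
  next
    fix n i j :: nat assume a: "j + 1 < i \<and> i \<le> n + 1"
    then obtain m where n: "n = Suc m" by (cases n) auto
    show "feq (X n) (fcomp (d' (n + 1) i) (s n j)) (fcomp (s (n - 1) j) (d' n (i - 1)))"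
      by (rule feq_fcomp_transfer[OF ds_gt[OF a], where H="X (n + 1)" and H'="X m"])
        (use a in \<open>auto simp: n Fs Fd faces'\<close>)
  qed
qed

lemma bisimplicial_feq_vertical_faces:
  assumes S: "bisimplicial B dh sh ve vt"
    and faces: "\<And>i j k. k \<le> Suc i \<Longrightarrow> feq (B (Suc i) j) (ve' (Suc i) j k) (ve (Suc i) j k)"
  shows "bisimplicial B dh sh ve' vt"
proof -
  have rows: "\<And>i. simplicial (B i) (dh i) (sh i)"
    and columns: "\<And>j. simplicial (column B j) (column_maps ve j) (column_maps vt j)"
    and ve_dh: "\<And>i j k l. k \<le> Suc i \<and> l \<le> Suc j \<Longrightarrow>
        feq (B (Suc i) (Suc j)) (fcomp (ve (Suc i) j k) (dh (Suc i) (Suc j) l))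
                                (fcomp (dh i (Suc j) l) (ve (Suc i) (Suc j) k))"
    and ve_sh: "\<And>i j k l. k \<le> Suc i \<and> l \<le> j \<Longrightarrow>
        feq (B (Suc i) j) (fcomp (ve (Suc i) (Suc j) k) (sh (Suc i) j l))
                          (fcomp (sh i j l) (ve (Suc i) j k))"
    and vt_rest: "\<forall>i j k l. k \<le> i \<and> l \<le> Suc j \<longrightarrow>
        feq (B i (Suc j)) (fcomp (vt i j k) (dh i (Suc j) l))
                          (fcomp (dh (Suc i) (Suc j) l) (vt i (Suc j) k))"
       "\<forall>i j k l. k \<le> i \<and> l \<le> j \<longrightarrow>
        feq (B i j) (fcomp (vt i (Suc j) k) (sh i j l))
                    (fcomp (sh (Suc i) j l) (vt i j k))"
    using S unfolding bisimplicial_def by simp_all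
  have Fdh: "\<And>i j l. l \<le> Suc j \<Longrightarrow> is_functor (B i (Suc j)) (B i j) (dh i (Suc j) l)"
    and Fsh: "\<And>i j l. l \<le> j \<Longrightarrow> is_functor (B i j) (B i (Suc j)) (sh i j l)"
    using rows unfolding simplicial_def by simp_all
  have Fve: "\<And>i j k. k \<le> Suc i \<Longrightarrow> is_functor (B (Suc i) j) (B i j) (ve (Suc i) j k)"
    using columns unfolding simplicial_def column_def column_maps_def by simp
  have faces': "k \<le> Suc i \<Longrightarrow> feq (B (Suc i) j) (ve (Suc i) j k) (ve' (Suc i) j k)" for i j k
    using faces by (rule feq_sym)
  have "simplicial (column B j) (column_maps ve' j) (column_maps vt j)" for j
    by (rule simplicial_feq_faces[OF columns]) (simp add: column_def column_maps_def faces)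
  moreover have "feq (B (Suc i) (Suc j)) (fcomp (ve' (Suc i) j k) (dh (Suc i) (Suc j) l))
                                         (fcomp (dh i (Suc j) l) (ve' (Suc i) (Suc j) k))"
    if a: "k \<le> Suc i \<and> l \<le> Suc j" for i j k l
    by (rule feq_fcomp_transfer[OF ve_dh[OF a], where H="B (Suc i) j" and H'="B i (Suc j)"])
      (use a in \<open>simp_all add: Fdh Fve faces'\<close>)
  moreover have "feq (B (Suc i) j) (fcomp (ve' (Suc i) (Suc j) k) (sh (Suc i) j l))
                                   (fcomp (sh i j l) (ve' (Suc i) j k))"
    if a: "k \<le> Suc i \<and> l \<le> j" for i j k l
    by (rule feq_fcomp_transfer[OF ve_sh[OF a], where H="B (Suc i) (Suc j)" and H'="B i j"])
      (use a in \<open>simp_all add: Fsh Fve faces'\<close>)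
  ultimately show ?thesis
    unfolding bisimplicial_def using rows vt_rest by blast
qed

lemma simplicial_map_iff_but_top:
  "simplicial_map X dX sX Y dY sY g \<longleftrightarrow>
     simplicial_map_but_top X dX sX Y dY sY g \<and>
     (\<forall>n. feq (X (Suc n)) (fcomp (dY (Suc n) (Suc n)) (g (Suc n))) (fcomp (g n) (dX (Suc n) (Suc n))))"
  unfolding simplicial_map_def simplicial_map_but_top_def by (auto simp: le_Suc_eq)

lemma tilde_ve_idem: "tilde_ve dh f (tilde_ve dh f ve) = tilde_ve dh f ve"
  by (simp add: tilde_ve_def fun_eq_iff)

lemma tilde_ve_feq_ve:
  assumes "perfect_abacus_map B dh sh ve vt f" "k \<le> Suc i"
  shows "feq (B (Suc i) j) (tilde_ve dh f ve (Suc i) j k) (ve (Suc i) j k)"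
proof (cases "k = Suc i")
  case True
  have "feq (B (Suc i) j) (ve (Suc i) j (Suc i)) (fcomp (dh i (Suc j) 0) (f i j))"
    using assms(1) unfolding perfect_abacus_map_def by blast
  then have "feq (B (Suc i) j) (fcomp (dh i (Suc j) 0) (f i j)) (ve (Suc i) j (Suc i))"
    by (rule feq_sym)
  with True show ?thesis
    by (simp add: tilde_ve_def)
qed (simp add: tilde_ve_def)

lemma perfect_abacus_map_column_simplicial:
  assumes "perfect_abacus_map B dh sh ve vt f"
  shows "simplicial_map
           (dec_obj (column B j)) (dec_top_maps (column_maps (tilde_ve dh f ve) j))
           (dec_top_maps (column_maps vt j))
           (column B (Suc j)) (column_maps (tilde_ve dh f ve) (Suc j)) (column_maps vt (Suc j))
           (\<lambda>i. f i j)"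
proof -
  have "simplicial_map_but_top
           (dec_obj (column B j)) (dec_top_maps (column_maps ve j)) (dec_top_maps (column_maps vt j))
           (column B (Suc j)) (column_maps ve (Suc j)) (column_maps vt (Suc j)) (\<lambda>i. f i j)"
    using assms unfolding perfect_abacus_map_def abacus_map_def by blast
  then have but_top: "simplicial_map_but_top
           (dec_obj (column B j)) (dec_top_maps (column_maps (tilde_ve dh f ve) j))
           (dec_top_maps (column_maps vt j))
           (column B (Suc j)) (column_maps (tilde_ve dh f ve) (Suc j)) (column_maps vt (Suc j))
           (\<lambda>i. f i j)"
    by (simp add: simplicial_map_but_top_def dec_top_maps_def column_maps_def tilde_ve_def)
  have perfect_top: "feq (B (Suc (Suc n)) j) (fcomp (f n j) (ve (Suc (Suc n)) j (Suc n)))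
          (fcomp (dh n (Suc (Suc j)) 0) (fcomp (f n (Suc j)) (f (Suc n) j)))" for n
    using assms unfolding perfect_abacus_map_def by blast
  have top: "feq (B (Suc (Suc n)) j)
          (fcomp (tilde_ve dh f ve (Suc n) (Suc j) (Suc n)) (f (Suc n) j))
          (fcomp (f n j) (tilde_ve dh f ve (Suc (Suc n)) j (Suc n)))" for n
    using feq_sym[OF perfect_top] by (simp add: tilde_ve_def fcomp_assoc)
  show ?thesis
    unfolding simplicial_map_iff_but_top
    using but_top top unfolding dec_obj_def dec_top_maps_def column_def column_maps_def by blast
qed

theorem proposition2p2:
  fixes B :: "nat \<Rightarrow> nat \<Rightarrow> ('o, 'm) grpd"
    and dh sh ve vt :: "nat \<Rightarrow> nat \<Rightarrow> nat \<Rightarrow> ('o, 'm) gfun"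
    and f :: "nat \<Rightarrow> nat \<Rightarrow> ('o, 'm) gfun"
  assumes "bisimplicial B dh sh ve vt"
    and "perfect_abacus_map B dh sh ve vt f"
  shows "bisimplicial B dh sh (tilde_ve dh f ve) vt
     \<and> (\<forall>j. simplicial_map
            (dec_obj (column B j)) (dec_top_maps (column_maps (tilde_ve dh f ve) j))
            (dec_top_maps (column_maps vt j))
            (column B (Suc j)) (column_maps (tilde_ve dh f ve) (Suc j)) (column_maps vt (Suc j))
            (\<lambda>i. f i j))
     \<and> tilde_ve dh f (tilde_ve dh f ve) = tilde_ve dh f ve"
proof -
  have "bisimplicial B dh sh (tilde_ve dh f ve) vt"
    by (rule bisimplicial_feq_vertical_faces[OF assms(1)]) (rule tilde_ve_feq_ve[OF assms(2)])
  moreover have "simplicial_map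
            (dec_obj (column B j)) (dec_top_maps (column_maps (tilde_ve dh f ve) j))
            (dec_top_maps (column_maps vt j))
            (column B (Suc j)) (column_maps (tilde_ve dh f ve) (Suc j)) (column_maps vt (Suc j))
            (\<lambda>i. f i j)" for j
    using assms(2) by (rule perfect_abacus_map_column_simplicial)
  ultimately show ?thesis
    by (simp add: tilde_ve_idem)
qed

end
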